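(* The Baxter monoid $\mathrm{baxt}_\infty$ satisfies the identities $$ysxt\,xy\,hxky \approx ysxt\,yx\,hxky \quad\text{and}\quad xsyt\,xy\,hxky \approx xsyt\,yx\,hxky.$$
   Context: Let $\mathcal{A}=\{1<2<3<\cdots\}$. Right strict binary search tree: labelled rooted binary tree in which each node's label is $\ge$ every label in its left subtree and $<$ every label in its right subtree; inserting $a$: if empty create node $a$, else with root label $x$ insert into right subtree if $a>x$, left subtree otherwise. $\mathrm{P}_{\mathrm{sylv}}(w_1\cdots w_k)$ is obtained from the empty tree by inserting $w_k,\dots,w_1$ in this order. Left strict binary search tree: each node's label is $>$ every label in its left subtree and $\le$ every label in its right subtree; inserting $a$: if empty create node $a$, else with root label $x$ insert into left subtree if $a<x$, right subtree otherwise. $\mathrm{P}^\sharp(w_1\cdots w_k)$ is obtained from the empty tree by inserting $w_1,\dots,w_k$ in this order. Set $\mathrm{P}_{\mathrm{baxt}}(w)=(\mathrm{P}^\sharp(w),\mathrm{P}_{\mathrm{sylv}}(w))$. The Baxter monoid $\mathrm{baxt}_\infty$ is $\mathcal{A}^*/{\equiv}$ with $u\equiv v\iff\mathrm{P}_{\mathrm{baxt}}(u)=\mathrm{P}_{\mathrm{baxt}}(v)$. A monoid $S$ satisfies an identity $\mathbf{u}\approx\mathbf{v}$ between words over an alphabet of letters if $\varphi(\mathbf{u})=\varphi(\mathbf{v})$ for every assignment $\varphi$ of elements of $S$ (including the identity element) to the letters. *)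

theory Defs
  imports Main
begin

datatype btree = Leaf | Node btree nat btree

fun ins_right :: "nat \<Rightarrow> btree \<Rightarrow> btree" where
  "ins_right a Leaf = Node Leaf a Leaf"
| "ins_right a (Node l x r) =
     (if a > x then Node l x (ins_right a r) else Node (ins_right a l) x r)"

fun ins_left :: "nat \<Rightarrow> btree \<Rightarrow> btree" where
  "ins_left a Leaf = Node Leaf a Leaf"
| "ins_left a (Node l x r) =
     (if a < x then Node (ins_left a l) x r else Node l x (ins_left a r))"

definition P_sylv :: "nat list \<Rightarrow> btree" where
  "P_sylv w = fold ins_right (rev w) Leaf"

definition P_sharp :: "nat list \<Rightarrow> btree" where
  "P_sharp w = fold ins_left w Leaf"

definition P_baxt :: "nat list \<Rightarrow> btree \<times> btree" where
  "P_baxt w = (P_sharp w, P_sylv w)"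

definition baxt_equiv :: "nat list \<Rightarrow> nat list \<Rightarrow> bool" where
  "baxt_equiv u v \<longleftrightarrow> P_baxt u = P_baxt v"

datatype var = X | Y | S | T | H | K

text \<open>baxt_infinity satisfies u ~ v: every assignment of elements of the monoid
  (represented by words over the positive integers, the empty word being the identity)
  to letters gives Baxter-congruent evaluations.\<close>
definition baxt_satisfies :: "var list \<Rightarrow> var list \<Rightarrow> bool" where
  "baxt_satisfies u v \<longleftrightarrow>
     (\<forall>\<phi> :: var \<Rightarrow> nat list. (\<forall>z. \<forall>c \<in> set (\<phi> z). 1 \<le> c) \<longrightarrow>
        baxt_equiv (concat (map \<phi> u)) (concat (map \<phi> v)))"

end

theory Submission
  imports Defs
begin

text \<open>In a binary search tree, inserting two labels commutes as soon as their search paths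
  diverge, and the paths of \<open>a \<noteq> b\<close> diverge once a node labelled \<open>a\<close> or \<open>b\<close> is present.
  In both identities every letter of the swapped factor \<open>xy\<close> occurs both before it (so it is
  inserted into P_sharp first) and after it (so it is inserted into P_sylv first);
  hence swapping \<open>xy\<close> to \<open>yx\<close> changes neither tree.\<close>

fun ins_by :: "(nat \<Rightarrow> nat \<Rightarrow> bool) \<Rightarrow> nat \<Rightarrow> btree \<Rightarrow> btree" where
  "ins_by R a Leaf = Node Leaf a Leaf"
| "ins_by R a (Node l x r) =
     (if R a x then Node (ins_by R a l) x r else Node l x (ins_by R a r))"

fun paths_diverge :: "(nat \<Rightarrow> nat \<Rightarrow> bool) \<Rightarrow> btree \<Rightarrow> nat \<Rightarrow> nat \<Rightarrow> bool" where
  "paths_diverge R Leaf a b = False"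
| "paths_diverge R (Node l x r) a b =
     (R a x \<noteq> R b x \<or> paths_diverge R (if R a x then l else r) a b)"

lemma ins_left_eq_ins_by: "ins_left = ins_by (<)"
proof (intro ext)
  show "ins_left a t = ins_by (<) a t" for a t
    by (induction t) auto
qed

lemma ins_right_eq_ins_by: "ins_right = ins_by (\<le>)"
proof (intro ext)
  show "ins_right a t = ins_by (\<le>) a t" for a t
    by (induction t) auto
qed

lemma ins_by_commute:
  "a = b \<or> paths_diverge R t a b \<Longrightarrow> ins_by R a (ins_by R b t) = ins_by R b (ins_by R a t)"
  by (induction t) auto

lemma paths_diverge_ins_by:
  "paths_diverge R t a b \<Longrightarrow> paths_diverge R (ins_by R c t) a b"
  by (induction t) auto

lemma paths_diverge_fold_ins_by:
  "paths_diverge R t a b \<Longrightarrow> paths_diverge R (fold (ins_by R) w t) a b"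
  by (induction w arbitrary: t) (auto intro: paths_diverge_ins_by)

lemma paths_diverge_ins_by_endpoint:
  "c \<in> {a, b} \<Longrightarrow> R a c \<noteq> R b c \<Longrightarrow> paths_diverge R (ins_by R c t) a b"
  by (induction t) auto

lemma paths_diverge_fold_ins_by_endpoint:
  assumes "c \<in> set w" "c \<in> {a, b}" "R a c \<noteq> R b c"
  shows "paths_diverge R (fold (ins_by R) w t) a b"
  using assms(1)
proof (induction w arbitrary: t)
  case (Cons d w)
  show ?case
  proof (cases "c = d")
    case True
    then show ?thesis
      using assms(2,3) by (auto intro: paths_diverge_fold_ins_by paths_diverge_ins_by_endpoint)
  next
    case False
    then show ?thesis using Cons by simp
  qed
qed simp

lemma ins_by_fold_commute:
  assumes "\<And>a. a \<in> set xs \<Longrightarrow> a = b \<or> paths_diverge R t a b"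
  shows "ins_by R b (fold (ins_by R) xs t) = fold (ins_by R) xs (ins_by R b t)"
  using assms
proof (induction xs arbitrary: t)
  case (Cons a xs)
  have "ins_by R b (fold (ins_by R) xs (ins_by R a t))
      = fold (ins_by R) xs (ins_by R b (ins_by R a t))"
    using Cons by (auto intro: Cons.IH paths_diverge_ins_by)
  also have "\<dots> = fold (ins_by R) xs (ins_by R a (ins_by R b t))"
    using ins_by_commute[of a b R t] Cons.prems by auto
  finally show ?case by simp
qed simp

lemma fold_ins_by_append_commute:
  assumes "\<And>a b. a \<in> set xs \<Longrightarrow> b \<in> set ys \<Longrightarrow> a = b \<or> paths_diverge R t a b"
  shows "fold (ins_by R) (xs @ ys) t = fold (ins_by R) (ys @ xs) t"
  using assms
proof (induction ys arbitrary: t)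
  case (Cons b ys)
  have "fold (ins_by R) (xs @ b # ys) t = fold (ins_by R) ys (ins_by R b (fold (ins_by R) xs t))"
    by simp
  also have "\<dots> = fold (ins_by R) (xs @ ys) (ins_by R b t)"
    using ins_by_fold_commute[of xs b R t] Cons.prems by simp
  also have "\<dots> = fold (ins_by R) (ys @ xs) (ins_by R b t)"
    using Cons by (auto intro: Cons.IH paths_diverge_ins_by)
  finally show ?case by simp
qed simp

lemma fold_ins_by_swap_after_prefix:
  assumes "set x \<subseteq> set p" "set y \<subseteq> set p"
    and split: "\<And>a b. a \<noteq> b \<Longrightarrow> R a a \<noteq> R b a \<or> R a b \<noteq> R b b"
  shows "fold (ins_by R) (p @ x @ y) t = fold (ins_by R) (p @ y @ x) t"
proof -
  have "a = b \<or> paths_diverge R (fold (ins_by R) p t) a b" if "a \<in> set x" "b \<in> set y" for a b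
  proof (cases "a = b")
    case False
    then obtain c where "c \<in> {a, b}" "R a c \<noteq> R b c"
      using split by blast
    moreover have "c \<in> set p"
      using \<open>c \<in> {a, b}\<close> that assms(1,2) by auto
    ultimately show ?thesis
      using paths_diverge_fold_ins_by_endpoint by blast
  qed simp
  then show ?thesis
    using fold_ins_by_append_commute[of x y R "fold (ins_by R) p t"] by simp
qed

lemma P_sharp_swap:
  assumes "set x \<subseteq> set p" "set y \<subseteq> set p"
  shows "P_sharp (p @ x @ y @ q) = P_sharp (p @ y @ x @ q)"
proof -
  have "fold (ins_by (<)) (p @ x @ y) Leaf = fold (ins_by (<)) (p @ y @ x) Leaf"
    using assms by (intro fold_ins_by_swap_after_prefix) auto
  then show ?thesis
    unfolding P_sharp_def ins_left_eq_ins_by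
    by (metis append.assoc fold_append comp_apply)
qed

lemma P_sylv_swap:
  assumes "set x \<subseteq> set q" "set y \<subseteq> set q"
  shows "P_sylv (p @ x @ y @ q) = P_sylv (p @ y @ x @ q)"
proof -
  have "fold (ins_by (\<le>)) (rev q @ rev y @ rev x) Leaf
      = fold (ins_by (\<le>)) (rev q @ rev x @ rev y) Leaf"
    using assms by (intro fold_ins_by_swap_after_prefix) auto
  then show ?thesis
    unfolding P_sylv_def ins_right_eq_ins_by
    by (metis append.assoc fold_append comp_apply rev_append)
qed

lemma baxt_equiv_swap:
  assumes "set x \<subseteq> set p \<inter> set q" "set y \<subseteq> set p \<inter> set q"
  shows "baxt_equiv (p @ x @ y @ q) (p @ y @ x @ q)"
  using assms P_sharp_swap[of x p y q] P_sylv_swap[of x q y p]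
  unfolding baxt_equiv_def P_baxt_def by simp

theorem theorem4p9:
  shows "baxt_satisfies [Y,S,X,T,X,Y,H,X,K,Y] [Y,S,X,T,Y,X,H,X,K,Y]
       \<and> baxt_satisfies [X,S,Y,T,X,Y,H,X,K,Y] [X,S,Y,T,Y,X,H,X,K,Y]"
  unfolding baxt_satisfies_def
proof (intro conjI allI impI)
  fix \<phi> :: "var \<Rightarrow> nat list"
  show "baxt_equiv (concat (map \<phi> [Y,S,X,T,X,Y,H,X,K,Y])) (concat (map \<phi> [Y,S,X,T,Y,X,H,X,K,Y]))"
    using baxt_equiv_swap[of "\<phi> X" "\<phi> Y @ \<phi> S @ \<phi> X @ \<phi> T" "\<phi> H @ \<phi> X @ \<phi> K @ \<phi> Y" "\<phi> Y"]
    by auto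
  show "baxt_equiv (concat (map \<phi> [X,S,Y,T,X,Y,H,X,K,Y])) (concat (map \<phi> [X,S,Y,T,Y,X,H,X,K,Y]))"
    using baxt_equiv_swap[of "\<phi> X" "\<phi> X @ \<phi> S @ \<phi> Y @ \<phi> T" "\<phi> H @ \<phi> X @ \<phi> K @ \<phi> Y" "\<phi> Y"]
    by auto
qed

end
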